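(* Suppose that OnlinePacker (described in the context) has produced a packing of n horizontal parallelograms of height 1 and width at most 1 in which there are no near-empty boxes. Then the density of the pieces in the occupied part of the strip is at least Ω(n^{1-log 3}), where log is base 2.
   Context: Setting: online translational strip packing. The strip is a horizontal strip of height 1, bounded on the left by a vertical segment and unbounded to the right. Pieces arrive one at a time, each must be placed by a translation only, interior-disjoint from previously placed pieces, before the next piece is revealed. The occupied part of the strip is the part from its left end to the vertical line through the rightmost point of a placed piece; density is total piece area divided by the area of the occupied part. Here all pieces are horizontal parallelograms (parallelograms with a pair of horizontal edges) of height 1 and width at most 1. Box types: these form an infinite ternary tree. The root, the basic box type, is a 2 x 1 rectangle. A d-dimensional box type is a vector [x_1,...,x_d] in {-1,0,+1}^d and is a horizontal parallelogram of height 1. Given type T with bottom edge b and top edge t, split b into three equal consecutive segments b_{-1}, b_0, b_{+1} and t likewise into t_{-1}, t_0, t_{+1}; the child type T ⊕ [x_{d+1}] is the parallelogram spanned by b_0 and t_{x_{d+1}}. Thus a d-dimensional type has base edges of length 2·3^{-d} (area 2·3^{-d}). A box type T matches a piece P if P can be packed into T and area(T) ≤ 6·area(P). A type is suitable for P if it is an ancestor (including itself) of a type matching P. Algorithm OnlinePacker: each allocated box of type T contains either a single piece that T matches, or one, two or three boxes whose types are children of T. When a piece P arrives: if there is an allocated box B_1 whose type T_1 is suitable for P (with T_1,...,T_k the tree path from T_1 to a type T_k matching P) and B_1 has room for one more box of type T_2, choose such B_1 of maximum dimension; then for i = 1,...,k-1 allocate in B_i a new box B_{i+1} of type T_{i+1},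 as far left in B_i as possible, and place P in B_k. Otherwise allocate a new basic box as far left in the strip as possible, call it B_1, and proceed the same way. A d-dimensional box is near-empty if exactly one (d+1)-dimensional box is allocated in it. *)

theory Defs
  imports "HOL-Analysis.Analysis"
begin

text \<open>The strip is [0,oo) x [0,1] in coordinates (u,y).  A horizontal parallelogram
of height 1 whose bottom edge is [x, x+w] (at y=0) and whose top edge is
[x+s, x+s+w] (at y=1).  Its horizontal edge length is w, its skew is s, its area
is w and its width (horizontal extent) is w + |s|.\<close>

definition para :: "real \<Rightarrow> real \<Rightarrow> real \<Rightarrow> (real \<times> real) set" where
  "para x w s = {(u, y). 0 \<le> y \<and> y \<le> 1 \<and> x + s * y \<le> u \<and> u \<le> x + s * y + w}"

definition piece_ok :: "real \<times> real \<Rightarrow> bool" where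
  "piece_ok P = (0 < fst P \<and> fst P + \<bar>snd P\<bar> \<le> 1)"

text \<open>A box type is a list [x_1,...,x_d] over {-1,0,1}.  Its geometry (relative to
the basic box [0,2] x [0,1]) is the triple (b, t, L): bottom edge [b, b+L],
top edge [t, t+L].  The child T @ [x] is spanned by the middle third of the
bottom edge and the x-th third of the top edge.\<close>

definition valid_type :: "int list \<Rightarrow> bool" where
  "valid_type T = (set T \<subseteq> {-1, 0, 1})"

definition child_geom :: "real \<times> real \<times> real \<Rightarrow> int \<Rightarrow> real \<times> real \<times> real" where
  "child_geom g x = (case g of (b, t, L) \<Rightarrow> (b + L / 3, t + (of_int x + 1) * L / 3, L / 3))"

definition tgeom :: "int list \<Rightarrow> real \<times> real \<times> real" where
  "tgeom T = foldl child_geom (0, 0, 2) T"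

text \<open>Base edge length of a type (= its area, since the height is 1).\<close>
definition tlen :: "int list \<Rightarrow> real" where
  "tlen T = snd (snd (tgeom T))"

definition box_set :: "int list \<Rightarrow> real \<Rightarrow> (real \<times> real) set" where
  "box_set T p = (case tgeom T of (b, t, L) \<Rightarrow>
     {(u, y). 0 \<le> y \<and> y \<le> 1 \<and> p + b + (t - b) * y \<le> u \<and> u \<le> p + b + (t - b) * y + L})"

definition matches :: "int list \<Rightarrow> real \<Rightarrow> real \<Rightarrow> bool" where
  "matches T w s = ((\<exists>v. para v w s \<subseteq> box_set T 0) \<and> tlen T \<le> 6 * w)"

text \<open>Boxes: (type, horizontal translation, parent box index; None for basic boxes).
Pieces: (w, s, horizontal position x, index of the box containing it); the piece
occupies para x w s.\<close>

record pstate =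
  bxs :: "(int list \<times> real \<times> nat option) list"
  pcs :: "(real \<times> real \<times> real \<times> nat) list"

definition init_state :: pstate where
  "init_state = \<lparr>bxs = [], pcs = []\<rparr>"

definition bt :: "pstate \<Rightarrow> nat \<Rightarrow> int list" where
  "bt S i = fst (bxs S ! i)"
definition bpos :: "pstate \<Rightarrow> nat \<Rightarrow> real" where
  "bpos S i = fst (snd (bxs S ! i))"
definition bpar :: "pstate \<Rightarrow> nat \<Rightarrow> nat option" where
  "bpar S i = snd (snd (bxs S ! i))"

definition bset :: "pstate \<Rightarrow> nat \<Rightarrow> (real \<times> real) set" where
  "bset S i = box_set (bt S i) (bpos S i)"

definition children :: "pstate \<Rightarrow> nat \<Rightarrow> nat set" where
  "children S i = {j. j < length (bxs S) \<and> bpar S j = Some i}"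

definition has_piece :: "pstate \<Rightarrow> nat \<Rightarrow> bool" where
  "has_piece S i = (\<exists>P \<in> set (pcs S). snd (snd (snd P)) = i)"

definition add_box :: "pstate \<Rightarrow> int list \<Rightarrow> real \<Rightarrow> nat option \<Rightarrow> pstate" where
  "add_box S T p par = S\<lparr>bxs := bxs S @ [(T, p, par)]\<rparr>"

definition add_piece :: "pstate \<Rightarrow> real \<Rightarrow> real \<Rightarrow> real \<Rightarrow> nat \<Rightarrow> pstate" where
  "add_piece S w s x i = S\<lparr>pcs := pcs S @ [(w, s, x, i)]\<rparr>"

definition free_pos :: "pstate \<Rightarrow> nat \<Rightarrow> int list \<Rightarrow> real set" where
  "free_pos S i U = {p. \<not> has_piece S i \<and> box_set U p \<subseteq> bset S i \<and>
      (\<forall>j \<in> children S i. interior (box_set U p) \<inter> interior (bset S j) = {})}"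

definition free_strip :: "pstate \<Rightarrow> real set" where
  "free_strip S = {p. 0 \<le> p \<and>
      (\<forall>j < length (bxs S). bpar S j = None \<longrightarrow> interior (box_set [] p) \<inter> interior (bset S j) = {})}"

definition leftmost :: "real set \<Rightarrow> real \<Rightarrow> bool" where
  "leftmost A p = (p \<in> A \<and> (\<forall>q \<in> A. p \<le> q))"

text \<open>descend S i V S' k: starting in box i, allocate successively boxes of the types
bt S i @ [v1], bt S i @ [v1,v2], ..., each as far left as possible in the previous one;
k is the index of the last box.\<close>
inductive descend :: "pstate \<Rightarrow> nat \<Rightarrow> int list \<Rightarrow> pstate \<Rightarrow> nat \<Rightarrow> bool" where
  descend_Nil: "descend S i [] S i"
| descend_Cons: "leftmost (free_pos S i (bt S i @ [x])) p \<Longrightarrow>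
     descend (add_box S (bt S i @ [x]) p (Some i)) (length (bxs S)) xs S' k \<Longrightarrow>
     descend S i (x # xs) S' k"

text \<open>Box i can serve as B_1 for the piece (w,s) along the path V (V nonempty,
bt S i @ V matches, and box i has room for a box of type T_2 = bt S i @ [hd V]).\<close>
definition candidate :: "pstate \<Rightarrow> real \<Rightarrow> real \<Rightarrow> nat \<Rightarrow> int list \<Rightarrow> bool" where
  "candidate S w s i V = (i < length (bxs S) \<and> V \<noteq> [] \<and> valid_type (bt S i @ V) \<and>
      matches (bt S i @ V) w s \<and> free_pos S i (bt S i @ [hd V]) \<noteq> {})"

text \<open>One step of OnlinePacker (all unspecified choices are left nondeterministic).\<close>
definition step :: "pstate \<Rightarrow> real \<times> real \<Rightarrow> pstate \<Rightarrow> bool" where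
  "step S P S' = (case P of (w, s) \<Rightarrow>
     (\<exists>i V S1 k x. candidate S w s i V \<and>
        (\<forall>j U. candidate S w s j U \<longrightarrow> length (bt S j) \<le> length (bt S i)) \<and>
        descend S i V S1 k \<and> para x w s \<subseteq> bset S1 k \<and> S' = add_piece S1 w s x k)
   \<or> ((\<nexists>j U. candidate S w s j U) \<and>
      (\<exists>p V S1 k x. leftmost (free_strip S) p \<and> valid_type V \<and> matches V w s \<and>
        descend (add_box S [] p None) (length (bxs S)) V S1 k \<and>
        para x w s \<subseteq> bset S1 k \<and> S' = add_piece S1 w s x k)))"

inductive run :: "(real \<times> real) list \<Rightarrow> pstate \<Rightarrow> bool" where
  run_Nil: "run [] init_state"
| run_snoc: "run ps S \<Longrightarrow> step S P S' \<Longrightarrow> run (ps @ [P]) S'"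

definition no_near_empty :: "pstate \<Rightarrow> bool" where
  "no_near_empty S = (\<forall>i < length (bxs S). card (children S i) \<noteq> 1)"

definition piece_area :: "pstate \<Rightarrow> real" where
  "piece_area S = (\<Sum>P \<leftarrow> pcs S. fst P)"

definition occupied_length :: "pstate \<Rightarrow> real" where
  "occupied_length S = Max (set (map (\<lambda>(w, s, x, i). x + w + max 0 s) (pcs S)))"

definition density :: "pstate \<Rightarrow> real" where
  "density S = piece_area S / occupied_length S"

end

(*
  Let B be the number of basic boxes. Basic boxes are placed as far left as possible, so all
  boxes, and hence all pieces, lie in [0, 2B]; the occupied length is at most 2B.

  Give a box of dimension d the weight 2^-d. Without near-empty boxes every box with children
  has at least two, each of half its weight, so the leaves weigh at least as much as the B basic
  boxes. Every leaf holds a piece, so B <= sum_k 2^-d_k, where d_k is the dimension of the box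
  of the k-th piece, whose area 2 * 3^-d_k is at most six times the area of the piece. Since
  3^-d = (2^-d)^(log 3), convexity of t |-> t^(log 3) gives
  sum_k 3^-d_k >= n (B/n)^(log 3) >= B n^(1 - log 3), so the pieces have area at least
  B n^(1 - log 3) / 3 and the density is at least n^(1 - log 3) / 6.
*)
theory Submission
  imports Defs
begin

lemma sum_roots_le_sum_leaves:
  fixes par :: "'a \<Rightarrow> 'a option" and f :: "'a \<Rightarrow> 'b::ordered_ab_group_add"
  assumes "finite V"
    and "\<And>j i. j \<in> V \<Longrightarrow> par j = Some i \<Longrightarrow> i \<in> V"
    and "\<And>i. i \<in> V \<Longrightarrow> {j\<in>V. par j = Some i} \<noteq> {} \<Longrightarrow>
      f i \<le> sum f {j\<in>V. par j = Some i}"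
  shows "sum f {j\<in>V. par j = None} \<le> sum f {i\<in>V. {j\<in>V. par j = Some i} = {}}"
proof -
  define inner where "inner = {i\<in>V. {j\<in>V. par j = Some i} \<noteq> {}}"
  have split: "sum f V = sum f {j\<in>V. P j} + sum f {j\<in>V. \<not> P j}" for P
    using assms(1) by (subst sum.union_disjoint[symmetric]) (auto intro: sum.cong)
  have "sum f inner \<le> (\<Sum>i\<in>inner. sum f {j\<in>V. par j = Some i})"
    by (rule sum_mono) (simp add: inner_def assms(3))
  also have "\<dots> = (\<Sum>i\<in>inner. sum f {j\<in>{j\<in>V. par j \<noteq> None}. the (par j) = i})"
    by (intro sum.cong) auto
  also have "\<dots> = sum f {j\<in>V. par j \<noteq> None}"
    using assms(1,2) by (intro sum.group) (auto simp: inner_def)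
  finally have "sum f inner \<le> sum f {j\<in>V. par j \<noteq> None}" .
  then have "sum f inner + sum f {j\<in>V. par j = None} \<le> sum f V"
    using split[of "\<lambda>j. par j = None"] by (simp add: add.commute add_left_mono)
  also have "\<dots> = sum f inner + sum f {i\<in>V. {j\<in>V. par j = Some i} = {}}"
    using split[of "\<lambda>i. {j\<in>V. par j = Some i} \<noteq> {}"] by (simp add: inner_def)
  finally show ?thesis by simp
qed

lemma powr_mean_le:
  fixes x :: "'a \<Rightarrow> real"
  assumes "finite I" "I \<noteq> {}" "1 \<le> p" "\<And>i. i \<in> I \<Longrightarrow> 0 < x i"
  shows "((\<Sum>i\<in>I. x i) / card I) powr p \<le> (\<Sum>i\<in>I. x i powr p) / card I"
proof -
  have "(\<lambda>t. t powr p) (\<Sum>i\<in>I. (1 / card I) *\<^sub>R x i) \<le>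
      (\<Sum>i\<in>I. (1 / card I) * x i powr p)"
    using assms by (intro convex_on_sum[OF _ _ powr_convex]) auto
  then show ?thesis
    by (simp add: sum_divide_distrib[symmetric] sum_distrib_left[symmetric])
qed

lemma half_power_powr_log: "((1/2::real) ^ d) powr log 2 3 = (1/3) ^ d"
proof -
  have "((1/2::real) ^ d) powr log 2 3 = ((1/2) powr log 2 3) powr real d"
    by (simp add: powr_realpow[symmetric] powr_powr mult.commute)
  also have "\<dots> = (1/3) ^ d"
    by (simp add: powr_divide powr_realpow power_one_over)
  finally show ?thesis .
qed

lemma sum_third_powers_ge:
  fixes d :: "nat \<Rightarrow> nat"
  assumes "0 < n" "1 \<le> B" "B \<le> (\<Sum>k<n. (1/2::real) ^ d k)"
  shows "B * real n powr (1 - log 2 3) \<le> (\<Sum>k<n. (1/3::real) ^ d k)"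
proof -
  let ?p = "log 2 3"
  have p: "1 \<le> ?p" by simp
  have "B * real n powr (1 - ?p) \<le> B powr ?p * real n powr (1 - ?p)"
    using assms(2) p by (intro mult_right_mono) (auto intro: order.trans[OF _ powr_mono[of 1]])
  also have "\<dots> = real n * (B / n) powr ?p"
    using assms(1,2) by (simp add: powr_diff powr_divide)
  also have "\<dots> \<le> real n * ((\<Sum>k<n. (1/2::real) ^ d k) / n) powr ?p"
    using assms by (intro mult_left_mono powr_mono2 divide_right_mono) auto
  also have "\<dots> \<le> (\<Sum>k<n. ((1/2::real) ^ d k) powr ?p)"
    using powr_mean_le[of "{..<n}" ?p "\<lambda>k. (1/2::real) ^ d k"] assms(1) p
    by (simp add: field_simps lessThan_empty_iff)
  also have "\<dots> = (\<Sum>k<n. (1/3::real) ^ d k)"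
    by (simp add: half_power_powr_log)
  finally show ?thesis .
qed

lemma tlen_eq: "tlen T = 2 / 3 ^ length T"
proof -
  have "snd (snd (foldl child_geom g T)) = snd (snd g) / 3 ^ length T" for g
  proof (induction T arbitrary: g)
    case (Cons x T)
    then show ?case by (cases g) (simp add: child_geom_def)
  qed simp
  then show ?thesis by (simp add: tlen_def tgeom_def)
qed

lemma box_set_Nil: "box_set [] p = {p..p+2} \<times> {0..1}"
  by (auto simp: box_set_def tgeom_def)

definition num_basic :: "pstate \<Rightarrow> nat" where
  "num_basic S = card {j. j < length (bxs S) \<and> bpar S j = None}"

lemma length_add_box [simp]: "length (bxs (add_box S T p par)) = Suc (length (bxs S))"
  by (simp add: add_box_def)

lemma pcs_add_box [simp]: "pcs (add_box S T p par) = pcs S"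
  by (simp add: add_box_def)

lemma has_piece_add_box [simp]: "has_piece (add_box S T p par) = has_piece S"
  by (simp add: has_piece_def fun_eq_iff)

lemma add_box_old:
  assumes "j < length (bxs S)"
  shows "bt (add_box S T p par) j = bt S j" "bpar (add_box S T p par) j = bpar S j"
    "bset (add_box S T p par) j = bset S j"
  using assms by (simp_all add: add_box_def bt_def bpar_def bset_def bpos_def nth_append)

lemma add_box_new:
  "bt (add_box S T p par) (length (bxs S)) = T" "bpar (add_box S T p par) (length (bxs S)) = par"
  "bset (add_box S T p par) (length (bxs S)) = box_set T p"
  by (simp_all add: add_box_def bt_def bpar_def bset_def bpos_def)

lemma children_add_box:
  "children (add_box S T p par) i =
    children S i \<union> (if par = Some i then {length (bxs S)} else {})"
  by (auto simp: children_def less_Suc_eq add_box_old add_box_new)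

lemma num_basic_add_box:
  "num_basic (add_box S T p par) = num_basic S + (if par = None then 1 else 0)"
proof -
  have "{j. j < length (bxs (add_box S T p par)) \<and> bpar (add_box S T p par) j = None} =
      {j. j < length (bxs S) \<and> bpar S j = None} \<union>
      (if par = None then {length (bxs S)} else {})"
    by (auto simp: less_Suc_eq add_box_old add_box_new)
  then show ?thesis by (simp add: num_basic_def)
qed

definition box_forest :: "pstate \<Rightarrow> bool" where
  "box_forest S \<longleftrightarrow> (\<forall>j<length (bxs S).
     (bpar S j = None \<longrightarrow> bt S j = []) \<and>
     (\<forall>i. bpar S j = Some i \<longrightarrow> i < length (bxs S) \<and> (\<exists>x. bt S j = bt S i @ [x])) \<and>
     bset S j \<subseteq> {0..2 * real (num_basic S)} \<times> UNIV)"

lemma box_forestD: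
  assumes "box_forest S" "j < length (bxs S)"
  shows "bpar S j = None \<Longrightarrow> bt S j = []"
    and "bpar S j = Some i \<Longrightarrow> i < length (bxs S)"
    and "bpar S j = Some i \<Longrightarrow> \<exists>x. bt S j = bt S i @ [x]"
    and "bset S j \<subseteq> {0..2 * real (num_basic S)} \<times> UNIV"
  using assms by (simp_all add: box_forest_def)

definition pieces_matched :: "pstate \<Rightarrow> bool" where
  "pieces_matched S \<longleftrightarrow> (\<forall>(w, s, x, k)\<in>set (pcs S).
     k < length (bxs S) \<and> para x w s \<subseteq> bset S k \<and> tlen (bt S k) \<le> 6 * w)"

lemma pieces_matchedD:
  assumes "pieces_matched S" "(w, s, x, k) \<in> set (pcs S)"
  shows "k < length (bxs S)" "para x w s \<subseteq> bset S k" "tlen (bt S k) \<le> 6 * w"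
  using assms by (auto simp: pieces_matched_def)

text \<open>During a descent only the newest box may still be empty.\<close>

definition no_empty_box_except :: "pstate \<Rightarrow> nat \<Rightarrow> bool" where
  "no_empty_box_except S k \<longleftrightarrow>
    (\<forall>j<length (bxs S). j \<noteq> k \<longrightarrow> has_piece S j \<or> children S j \<noteq> {})"

definition no_empty_box :: "pstate \<Rightarrow> bool" where
  "no_empty_box S \<longleftrightarrow> (\<forall>j<length (bxs S). has_piece S j \<or> children S j \<noteq> {})"

lemma box_forest_add_child:
  assumes "box_forest S" "i < length (bxs S)" "box_set (bt S i @ [x]) p \<subseteq> bset S i"
  shows "box_forest (add_box S (bt S i @ [x]) p (Some i))"
  using assms unfolding box_forest_def
  by (auto simp: less_Suc_eq add_box_old add_box_new num_basic_add_box)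

lemma pieces_matched_add_box:
  assumes "pieces_matched S"
  shows "pieces_matched (add_box S T p par)"
  using assms unfolding pieces_matched_def by (fastforce simp: add_box_old)

lemma no_empty_box_imp_no_empty_box_except: "no_empty_box S \<Longrightarrow> no_empty_box_except S k"
  by (simp add: no_empty_box_def no_empty_box_except_def)

lemma no_empty_box_except_add_child:
  assumes "no_empty_box_except S i"
  shows "no_empty_box_except (add_box S T p (Some i)) (length (bxs S))"
  using assms unfolding no_empty_box_except_def by (auto simp: less_Suc_eq children_add_box)

lemma free_strip_num_basic:
  assumes "box_forest S"
  shows "2 * real (num_basic S) \<in> free_strip S"
  unfolding free_strip_def
proof (intro CollectI conjI allI impI)
  let ?q = "2 * real (num_basic S)"
  fix j assume j: "j < length (bxs S)" "bpar S j = None"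
  then have box: "bset S j = {bpos S j..bpos S j + 2} \<times> {0..1}"
    using assms by (simp add: box_forest_def bset_def box_set_Nil)
  have "(bpos S j + 2, 0) \<in> bset S j"
    by (simp add: box)
  then have "bpos S j + 2 \<le> ?q"
    using assms j unfolding box_forest_def by fastforce
  then show "interior (box_set [] ?q) \<inter> interior (bset S j) = {}"
    by (auto simp: box box_set_Nil interior_Times)
qed simp

lemma box_forest_add_basic:
  assumes "box_forest S" "leftmost (free_strip S) p"
  shows "box_forest (add_box S [] p None)"
proof -
  have "0 \<le> p" "p \<le> 2 * real (num_basic S)"
    using assms free_strip_num_basic[OF assms(1)] by (auto simp: leftmost_def free_strip_def)
  then show ?thesis
    using assms(1) unfolding box_forest_def
    by (fastforce simp: less_Suc_eq add_box_old add_box_new num_basic_add_box box_set_Nil)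
qed

lemma no_empty_box_except_add_basic:
  assumes "no_empty_box S"
  shows "no_empty_box_except (add_box S T p None) (length (bxs S))"
  using assms unfolding no_empty_box_def no_empty_box_except_def
  by (auto simp: less_Suc_eq children_add_box)

lemma descend_invariants:
  assumes "descend S i V S' k" "i < length (bxs S)"
    and "box_forest S" "pieces_matched S" "no_empty_box_except S i"
  shows "box_forest S' \<and> pieces_matched S' \<and> no_empty_box_except S' k \<and>
    k < length (bxs S') \<and> bt S' k = bt S i @ V \<and> pcs S' = pcs S"
  using assms
proof (induction rule: descend.induct)
  case (descend_Cons S i x p xs S' k)
  let ?S0 = "add_box S (bt S i @ [x]) p (Some i)"
  have "box_set (bt S i @ [x]) p \<subseteq> bset S i"
    using descend_Cons.hyps(1) by (simp add: leftmost_def free_pos_def)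
  then have "box_forest ?S0" "pieces_matched ?S0" "no_empty_box_except ?S0 (length (bxs S))"
    using descend_Cons.prems
    by (simp_all add: box_forest_add_child pieces_matched_add_box no_empty_box_except_add_child)
  then show ?case
    using descend_Cons.IH by (simp add: add_box_new)
qed simp

lemma add_piece_invariants:
  assumes "box_forest S" "pieces_matched S" "no_empty_box_except S k" "k < length (bxs S)"
    and "para x w s \<subseteq> bset S k" "tlen (bt S k) \<le> 6 * w"
  shows "box_forest (add_piece S w s x k) \<and> pieces_matched (add_piece S w s x k) \<and>
    no_empty_box (add_piece S w s x k)"
proof -
  let ?S = "add_piece S w s x k"
  have same: "bxs ?S = bxs S" "bt ?S = bt S" "bset ?S = bset S" "children ?S = children S"
    "num_basic ?S = num_basic S"
    by (simp_all add: add_piece_def fun_eq_iff bt_def bpar_def bset_def bpos_def children_def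
        num_basic_def)
  have "pcs ?S = pcs S @ [(w, s, x, k)]"
    by (simp add: add_piece_def)
  then have "pieces_matched ?S"
    using assms(2,4-6) by (simp add: pieces_matched_def same)
  moreover have "box_forest ?S"
    using assms(1) by (simp add: box_forest_def bpar_def same)
  moreover have "has_piece ?S k" "has_piece S j \<Longrightarrow> has_piece ?S j" for j
    by (auto simp: has_piece_def add_piece_def)
  ultimately show ?thesis
    using assms(3) unfolding no_empty_box_except_def no_empty_box_def same by blast
qed

lemma run_invariants:
  assumes "run ps S"
  shows "box_forest S \<and> pieces_matched S \<and> no_empty_box S \<and>
    map (\<lambda>(w, s, x, k). (w, s)) (pcs S) = ps"
  using assms
proof (induction rule: run.induct)
  case run_Nil
  then show ?case
    by (simp add: init_state_def box_forest_def pieces_matched_def no_empty_box_def)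
next
  case (run_snoc ps S P S')
  obtain w s where P: "P = (w, s)" by (cases P)
  from run_snoc.hyps(2) consider
    (nested) i V S1 k x where "candidate S w s i V" "descend S i V S1 k"
      "para x w s \<subseteq> bset S1 k" "S' = add_piece S1 w s x k"
  | (basic) p V S1 k x where "leftmost (free_strip S) p" "matches V w s"
      "descend (add_box S [] p None) (length (bxs S)) V S1 k"
      "para x w s \<subseteq> bset S1 k" "S' = add_piece S1 w s x k"
    unfolding step_def P by blast
  then obtain i V S1 k x S0 where S0:
      "descend S0 i V S1 k" "i < length (bxs S0)" "matches (bt S0 i @ V) w s"
      "box_forest S0" "pieces_matched S0" "no_empty_box_except S0 i" "pcs S0 = pcs S"
      "para x w s \<subseteq> bset S1 k" "S' = add_piece S1 w s x k"
  proof cases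
    case nested
    then show ?thesis
      using that[of S i V S1 k x] run_snoc.IH no_empty_box_imp_no_empty_box_except[of S i]
      by (simp add: candidate_def)
  next
    case basic
    then show ?thesis
      using that[of "add_box S [] p None" "length (bxs S)"] run_snoc.IH
      by (simp add: add_box_new box_forest_add_basic pieces_matched_add_box
          no_empty_box_except_add_basic)
  qed
  have "box_forest S1 \<and> pieces_matched S1 \<and> no_empty_box_except S1 k \<and>
      k < length (bxs S1) \<and> bt S1 k = bt S0 i @ V \<and> pcs S1 = pcs S0"
    using descend_invariants S0(1-6) by blast
  moreover have "tlen (bt S1 k) \<le> 6 * w"
    using S0(3) calculation by (simp add: matches_def)
  ultimately show ?case
    using add_piece_invariants[of S1 k x w s] S0(7-9) run_snoc.IH P by (simp add: add_piece_def)
qed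

definition piece_depth :: "pstate \<Rightarrow> nat \<Rightarrow> nat" where
  "piece_depth S k = length (bt S (snd (snd (snd (pcs S ! k)))))"

lemma num_basic_le_leaf_weight:
  assumes "box_forest S" "no_near_empty S"
  shows "real (num_basic S) \<le>
    (\<Sum>j | j < length (bxs S) \<and> children S j = {}. (1/2::real) ^ length (bt S j))"
proof -
  let ?V = "{..<length (bxs S)}"
  let ?f = "\<lambda>j. (1/2::real) ^ length (bt S j)"
  have children: "children S i = {j\<in>?V. bpar S j = Some i}" for i
    by (auto simp: children_def)
  have roots: "sum ?f {j\<in>?V. bpar S j = None} = real (num_basic S)"
    using assms(1) by (simp add: box_forest_def num_basic_def)
  have "sum ?f {j\<in>?V. bpar S j = None} \<le> sum ?f {i\<in>?V. {j\<in>?V. bpar S j = Some i} = {}}"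
  proof (rule sum_roots_le_sum_leaves)
    show "i \<in> ?V" if "j \<in> ?V" "bpar S j = Some i" for i j
      using assms(1) that by (simp add: box_forest_def)
  next
    fix i assume i: "i \<in> ?V" "{j\<in>?V. bpar S j = Some i} \<noteq> {}"
    then have "card (children S i) \<noteq> 0" "card (children S i) \<noteq> 1"
      using assms(2) by (simp_all add: children no_near_empty_def)
    then have two: "2 \<le> real (card (children S i))" by linarith
    have half: "?f j = ?f i / 2" if j: "j \<in> children S i" for j
    proof -
      obtain x where "bt S j = bt S i @ [x]"
        using box_forestD(3)[OF assms(1)] j unfolding children_def by blast
      then show ?thesis by simp
    qed
    have "sum ?f (children S i) = (\<Sum>j\<in>children S i. ?f i / 2)"
      using half by (rule sum.cong[OF refl])
    also have "\<dots> = real (card (children S i)) * (?f i / 2)"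
      by simp
    also have "\<dots> \<ge> ?f i"
      using mult_right_mono[OF two, of "?f i / 2"] by simp
    finally show "?f i \<le> sum ?f {j\<in>?V. bpar S j = Some i}"
      by (simp add: children)
  qed simp
  then show ?thesis
    using roots by (simp add: children)
qed

lemma num_basic_le_piece_weight:
  assumes "box_forest S" "no_near_empty S" "no_empty_box S"
  shows "real (num_basic S) \<le> (\<Sum>k<length (pcs S). (1/2::real) ^ piece_depth S k)"
proof -
  let ?box = "\<lambda>k. snd (snd (snd (pcs S ! k)))"
  let ?f = "\<lambda>j. (1/2::real) ^ length (bt S j)"
  have "{j. j < length (bxs S) \<and> children S j = {}} \<subseteq> ?box ` {..<length (pcs S)}"
  proof
    fix j assume "j \<in> {j. j < length (bxs S) \<and> children S j = {}}"
    then have "has_piece S j"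
      using assms(3) by (auto simp: no_empty_box_def)
    then obtain k where "k < length (pcs S)" "?box k = j"
      unfolding has_piece_def by (metis in_set_conv_nth)
    then show "j \<in> ?box ` {..<length (pcs S)}"
      by blast
  qed
  then have "sum ?f {j. j < length (bxs S) \<and> children S j = {}} \<le>
      sum ?f (?box ` {..<length (pcs S)})"
    by (intro sum_mono2) auto
  also have "\<dots> \<le> (\<Sum>k<length (pcs S). (1/2::real) ^ piece_depth S k)"
    using sum_image_le[of "{..<length (pcs S)}" ?f ?box] by (simp add: piece_depth_def comp_def)
  finally show ?thesis
    using num_basic_le_leaf_weight[OF assms(1,2)] by linarith
qed

lemma third_powers_le_piece_area:
  assumes "pieces_matched S"
  shows "(\<Sum>k<length (pcs S). (1/3::real) ^ piece_depth S k) \<le> 3 * piece_area S"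
proof -
  have "(1/3::real) ^ piece_depth S k \<le> 3 * fst (pcs S ! k)" if "k < length (pcs S)" for k
  proof -
    obtain w s x b where P: "pcs S ! k = (w, s, x, b)"
      by (cases "pcs S ! k")
    then have "(w, s, x, b) \<in> set (pcs S)"
      using that by (metis nth_mem)
    then have "tlen (bt S b) \<le> 6 * w"
      by (rule pieces_matchedD(3)[OF assms])
    then show ?thesis
      using P by (simp add: tlen_eq piece_depth_def power_one_over)
  qed
  then have "(\<Sum>k<length (pcs S). (1/3::real) ^ piece_depth S k) \<le>
      (\<Sum>k<length (pcs S). 3 * fst (pcs S ! k))"
    by (intro sum_mono) simp
  then show ?thesis
    by (simp add: piece_area_def sum_list_sum_nth atLeast0LessThan sum_distrib_left)
qed

lemma piece_extent:
  assumes "box_forest S" "pieces_matched S" "(w, s, x, k) \<in> set (pcs S)" "0 \<le> w"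
  shows "0 \<le> x \<and> x + w + max 0 s \<le> 2 * real (num_basic S)"
proof -
  have box: "para x w s \<subseteq> {0..2 * real (num_basic S)} \<times> UNIV"
    using pieces_matchedD(1,2)[OF assms(2,3)] box_forestD(4)[OF assms(1)] by blast
  have "(x, 0) \<in> para x w s" "(x + w, 0) \<in> para x w s" "(x + s + w, 1) \<in> para x w s"
    using assms(4) by (auto simp: para_def)
  then have "0 \<le> x" "x + w \<le> 2 * real (num_basic S)" "x + s + w \<le> 2 * real (num_basic S)"
    using subsetD[OF box] by fastforce+
  then show ?thesis
    by (simp add: max_def)
qed

lemma occupied_length_bounds:
  assumes "box_forest S" "pieces_matched S" "pcs S \<noteq> []" "\<forall>P\<in>set (pcs S). 0 < fst P"
  shows "0 < occupied_length S \<and> occupied_length S \<le> 2 * real (num_basic S)"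
proof -
  let ?E = "set (map (\<lambda>(w, s, x, i). x + w + max 0 s) (pcs S))"
  have extent: "0 < e \<and> e \<le> 2 * real (num_basic S)" if "e \<in> ?E" for e
  proof -
    obtain w s x k where P: "(w, s, x, k) \<in> set (pcs S)" "e = x + w + max 0 s"
      using \<open>e \<in> ?E\<close> by auto
    then have "0 < w"
      using assms(4) by fastforce
    moreover have "0 \<le> max 0 s"
      by simp
    ultimately show ?thesis
      using piece_extent[OF assms(1,2) P(1)] P(2) by linarith
  qed
  have E: "finite ?E" "?E \<noteq> {}"
    using assms(3) by simp_all
  have "0 < Max ?E"
    using extent[OF Max_in[OF E]] by blast
  moreover have "Max ?E \<le> 2 * real (num_basic S)"
    using extent by (intro Max.boundedI[OF E]) blast
  ultimately show ?thesis
    unfolding occupied_length_def by blast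
qed

lemma density_ge:
  assumes "box_forest S" "pieces_matched S" "no_empty_box S" "no_near_empty S"
    and "pcs S \<noteq> []" "\<forall>P\<in>set (pcs S). 0 < fst P"
  shows "1/6 * real (length (pcs S)) powr (1 - log 2 3) \<le> density S"
proof -
  let ?B = "real (num_basic S)" and ?q = "real (length (pcs S)) powr (1 - log 2 3)"
  have L: "0 < occupied_length S" "occupied_length S \<le> 2 * ?B"
    using occupied_length_bounds[OF assms(1,2,5,6)] by auto
  then have "0 < ?B"
    by linarith
  then have B: "1 \<le> ?B"
    by simp
  have "?B * ?q \<le> (\<Sum>k<length (pcs S). (1/3::real) ^ piece_depth S k)"
    using assms(5) B num_basic_le_piece_weight[OF assms(1,4,3)] by (intro sum_third_powers_ge) auto
  also have "\<dots> \<le> 3 * piece_area S"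
    by (rule third_powers_le_piece_area[OF assms(2)])
  finally have area: "?B * ?q \<le> 3 * piece_area S" .
  have "0 \<le> ?B * ?q"
    by simp
  then have "0 \<le> piece_area S"
    using area by linarith
  have "1/6 * ?q \<le> piece_area S / (2 * ?B)"
    using area B by (simp add: pos_le_divide_eq mult.commute)
  also have "\<dots> \<le> piece_area S / occupied_length S"
    using L \<open>0 \<le> piece_area S\<close> by (intro divide_left_mono) simp_all
  finally show ?thesis
    by (simp add: density_def)
qed

theorem lemma17:
  "\<exists>c > 0. \<exists>N. \<forall>ps S. run ps S \<longrightarrow> (\<forall>P \<in> set ps. piece_ok P) \<longrightarrow>
      no_near_empty S \<longrightarrow> length ps \<ge> N \<longrightarrow>
      density S \<ge> c * real (length ps) powr (1 - log 2 3)"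
proof (intro exI[of _ "1/6"] exI[of _ 1] conjI allI impI)
  fix ps S
  assume run: "run ps S" and ok: "\<forall>P \<in> set ps. piece_ok P" and ne: "no_near_empty S"
    and n: "1 \<le> length ps"
  have inv: "box_forest S" "pieces_matched S" "no_empty_box S"
    and shapes: "map (\<lambda>(w, s, x, k). (w, s)) (pcs S) = ps"
    using run_invariants[OF run] by auto
  then have len: "length (pcs S) = length ps"
    by (metis length_map)
  have "\<forall>P\<in>set (pcs S). 0 < fst P"
    using ok shapes by (fastforce simp: piece_ok_def)
  moreover have "pcs S \<noteq> []"
    using n len by auto
  ultimately show "1/6 * real (length ps) powr (1 - log 2 3) \<le> density S"
    using density_ge[OF inv ne] len by simp
qed simp

end
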